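(* Let $n\ge2$, $c\ge1$, $d\ge r\ge1$ and $\epsilon>0$, and let $B=2\epsilon^{-2}\frac{d}{cr}\log n$. There is a random set $F$ (a probability distribution over sets) of $d/B$ functions $f:\{0,1\}^d\to\{0,1\}^B$ such that for every $x,y\in\{0,1\}^d$: (1) with probability 1 there is at least one $f\in F$ with $\operatorname{dist}(f(x),f(y))\le\operatorname{dist}(x,y)\,B/d$; (2) if $\operatorname{dist}(x,y)\ge cr$, then for every $f\in F$, with probability at least $1-1/n$, $\operatorname{dist}(f(x),f(y))\ge(1-\epsilon)cr\,B/d$.
   Context: $\operatorname{dist}$ denotes Hamming distance (number of differing coordinates) on binary vectors of the appropriate length. *)

theory Defs
  imports "HOL-Probability.Probability"
begin

text \<open>Binary vectors in {0,1}^d are bool lists of length d.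
  Hamming distance: number of differing coordinates.\<close>
definition hdist :: "bool list \<Rightarrow> bool list \<Rightarrow> nat" where
  "hdist xs ys = card {i. i < length xs \<and> i < length ys \<and> xs ! i \<noteq> ys ! i}"

end

theory Submission
  imports Defs
begin

text \<open>Pick a uniformly random permutation of the \<open>d\<close> coordinates, cut it into \<open>d/B\<close> consecutive
  blocks of length \<open>B\<close>, and let the \<open>i\<close>-th function restrict a vector to the coordinates of the
  \<open>i\<close>-th block. The blocks partition the coordinates, so the distances of the restrictions add up
  to \<open>dist(x,y)\<close> and some block is at most average. A single block is a uniformly random
  \<open>B\<close>-subset, so the number of coordinates where \<open>x\<close> and \<open>y\<close> differ inside it is hypergeometric
  with mean \<open>\<mu> = dist(x,y) B/d \<ge> crB/d\<close>. The Chernoff bound, which holds for sampling without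
  replacement as well, makes it smaller than \<open>(1-\<epsilon>)\<mu>\<close> with probability at most
  \<open>exp(-\<epsilon>\<^sup>2\<mu>/2) \<le> 1/n\<close>; the choice of \<open>B\<close> is exactly what makes the last bound hold.\<close>

lemma chernoff_rate_ge:
  fixes e :: real
  assumes "0 \<le> e" "e < 1"
  shows "e^2/2 \<le> e + (1-e) * ln (1-e)"
proof -
  let ?f = "\<lambda>x::real. x + (1-x) * ln (1-x) - x^2/2"
  have "?f 0 \<le> ?f e"
  proof (rule DERIV_nonneg_imp_nondecreasing[OF assms(1)])
    fix x assume x: "0 \<le> x" "x \<le> e"
    hence x1: "1 - x > 0" using assms by simp
    have "DERIV ?f x :> (-ln(1-x) - x)"
      using x1 by (auto intro!: derivative_eq_intros)
    moreover have "-ln(1-x) - x \<ge> 0"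
      using ln_le_minus_one[of "1-x"] x1 by simp
    ultimately show "\<exists>y. DERIV ?f x :> y \<and> y \<ge> 0" by blast
  qed
  thus ?thesis by simp
qed

lemma one_minus_mult_exp_le:
  fixes a s :: real
  assumes "0 \<le> a" "a \<le> 1" "0 \<le> s" "s \<le> 1"
  shows "(1-a) * exp (a * s) \<le> (1-a) + a * s"
proof -
  have "exp ((1-s) *\<^sub>R 0 + s *\<^sub>R a) \<le> (1-s) * exp 0 + s * exp a"
    by (rule convex_onD[OF exp_convex]) (use assms in auto)
  hence convex: "exp (a * s) \<le> (1-s) + s * exp a" by (simp add: mult.commute)
  have "(1-a) * exp a \<le> exp (-a) * exp a"
    using exp_ge_add_one_self[of "-a"] by (intro mult_right_mono) auto
  hence at_a: "(1-a) * exp a \<le> 1" by (simp add: exp_minus)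
  have "(1-a) * exp (a * s) \<le> (1-a) * ((1-s) + s * exp a)"
    using convex assms by (intro mult_left_mono) auto
  also have "\<dots> = (1-a)*(1-s) + s * ((1-a) * exp a)" by (simp add: algebra_simps)
  also have "\<dots> \<le> (1-a)*(1-s) + s"
    using at_a assms by (simp add: mult_left_le)
  also have "\<dots> = (1-a) + a * s" by (simp add: algebra_simps)
  finally show ?thesis .
qed

text \<open>The first of \<open>N\<close> remaining elements lies among the \<open>M\<close> marked ones with probability
  \<open>M/N\<close>; this inequality propagates the bound on the generating function through that draw.\<close>
lemma hits_mgf_recurrence:
  fixes N M k :: nat and q :: real
  assumes N1: "N \<ge> 1" and MN: "M \<le> N" and kN: "k + 1 \<le> N" and "0 \<le> q" "q \<le> 1"
  shows "real M * q * exp (-(1-q) * real k * (real M - 1) / (real N - 1))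
       + real (N - M) * exp (-(1-q) * real k * real M / (real N - 1))
       \<le> real N * exp (-(1-q) * real (Suc k) * real M / real N)"
proof -
  define a where "a = 1 - q"
  define w where "w = real k / (real N - 1)"
  define base where "base = exp (-a * w * real M)"
  have a: "0 \<le> a" "a \<le> 1" "q = 1 - a" using assms by (auto simp: a_def)
  have w: "0 \<le> w" "w \<le> 1" using N1 kN by (auto simp: w_def divide_simps)
  have Suc_k: "real (Suc k) / real N = w + (1 - w) / real N"
  proof (cases "N = 1")
    case True then show ?thesis using kN by (simp add: w_def)
  next
    case False
    then have "w * (real N - 1) = real k" using N1 by (simp add: w_def)
    then show ?thesis using N1 by (simp add: field_simps)
  qed
  have "real M * q * exp (-a * w * real M + a * w) + (real N - real M) * base
      = base * (real M * (q * exp (a * w)) + real N - real M)"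
    by (simp add: base_def exp_add[symmetric] algebra_simps)
  also have "\<dots> \<le> base * (real M * (q + a * w) + real N - real M)"
    using one_minus_mult_exp_le[OF a(1,2) w] a(3)
    by (intro mult_left_mono add_right_mono) (auto simp: base_def intro: mult_left_mono)
  also have "\<dots> = base * (real N * (1 + (-(real M / real N) * a * (1-w))))"
    unfolding a(3) using N1 by (simp add: field_simps)
  also have "\<dots> \<le> base * (real N * exp (-(real M / real N) * a * (1-w)))"
    by (intro mult_left_mono exp_ge_add_one_self) (auto simp: base_def)
  also have "\<dots> = real N * exp (-a * real M * (real (Suc k) / real N))"
    unfolding Suc_k base_def using N1 by (simp add: mult_exp_exp field_simps)
  finally have "real M * q * exp (-a * w * real M + a * w) + (real N - real M) * base
      \<le> real N * exp (-a * real M * (real (Suc k) / real N))" .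
  moreover have "-(1-q) * real k * (real M - 1) / (real N - 1) = -a * w * real M + a * w"
    by (simp add: a_def w_def algebra_simps add_divide_distrib[symmetric])
  moreover have "-(1-q) * real k * real M / (real N - 1) = -a * w * real M"
    by (simp add: a_def w_def algebra_simps)
  moreover have "-(1-q) * real (Suc k) * real M / real N = -a * real M * (real (Suc k) / real N)"
    by (simp add: a_def)
  ultimately show ?thesis
    using MN by (simp add: base_def of_nat_diff)
qed

definition hits :: "'a set \<Rightarrow> 'a list \<Rightarrow> nat" where
  "hits D xs = length (filter (\<lambda>x. x \<in> D) xs)"

lemma hits_Nil [simp]: "hits D [] = 0"
  by (simp add: hits_def)

lemma hits_Cons [simp]: "hits D (x # xs) = (if x \<in> D then Suc (hits D xs) else hits D xs)"
  by (simp add: hits_def)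

lemma sum_permutations_of_set_Cons:
  assumes "finite A" "A \<noteq> {}"
  shows "(\<Sum>ps\<in>permutations_of_set A. g ps)
       = (\<Sum>x\<in>A. \<Sum>xs\<in>permutations_of_set (A - {x}). g (x # xs))"
proof -
  have "(\<Sum>ps\<in>permutations_of_set A. g ps)
      = (\<Sum>x\<in>A. \<Sum>ps\<in>(#) x ` permutations_of_set (A - {x}). g ps)"
    using assms by (simp add: permutations_of_set_nonempty, intro sum.UNION_disjoint) auto
  also have "\<dots> = (\<Sum>x\<in>A. \<Sum>xs\<in>permutations_of_set (A - {x}). g (x # xs))"
    by (simp add: sum.reindex)
  finally show ?thesis .
qed

text \<open>Sampling without replacement: the generating function of the hypergeometric count is
  bounded as for the binomial one. Conditioning on the first entry of the permutation reduces
  \<open>k\<close> by one.\<close>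
lemma sum_permutations_pow_hits_le:
  fixes q :: real
  assumes "finite A" "k \<le> card A" "0 \<le> q" "q \<le> 1"
  shows "(\<Sum>ps\<in>permutations_of_set A. q ^ hits D (take k ps))
     \<le> fact (card A) * exp (-(1-q) * real k * real (card (A \<inter> D)) / real (card A))"
  using assms
proof (induction k arbitrary: A)
  case 0
  then show ?case by simp
next
  case (Suc k A)
  define N where "N = card A"
  define M where "M = card (A \<inter> D)"
  define bound where "bound m = fact (N-1) * exp (-(1-q) * real k * m / (real N - 1))" for m
  have N1: "N \<ge> 1" and MN: "M \<le> N" and A_D: "card (A - D) = N - M"
    using Suc.prems by (auto simp: N_def M_def card_mono card_Diff_subset_Int Diff_Int2)
  have IH: "(\<Sum>xs\<in>permutations_of_set (A - {x}). q ^ hits D (take k xs))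
      \<le> bound (if x \<in> D then real M - 1 else real M)" if "x \<in> A" for x
  proof -
    have "(A - {x}) \<inter> D = (A \<inter> D) - {x}" by auto
    moreover have "x \<in> D \<Longrightarrow> M > 0"
      using that Suc.prems(1) unfolding M_def by (auto simp: card_gt_0_iff)
    ultimately have "real (card ((A - {x}) \<inter> D)) = (if x \<in> D then real M - 1 else real M)"
      using that Suc.prems(1) by (auto simp: M_def of_nat_diff Suc_le_eq)
    then show ?thesis
      using Suc.IH[of "A - {x}"] Suc.prems that by (simp add: bound_def N_def)
  qed
  have "(\<Sum>ps\<in>permutations_of_set A. q ^ hits D (take (Suc k) ps))
      = (\<Sum>x\<in>A. (if x \<in> D then q else 1) *
           (\<Sum>xs\<in>permutations_of_set (A - {x}). q ^ hits D (take k xs)))"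
    using Suc.prems
    by (subst sum_permutations_of_set_Cons) (auto simp: sum_distrib_left intro!: sum.cong)
  also have "\<dots> \<le> (\<Sum>x\<in>A. if x \<in> D then q * bound (real M - 1) else bound (real M))"
    using IH Suc.prems by (intro sum_mono) (fastforce intro: mult_left_mono)
  also have "\<dots> = real M * q * bound (real M - 1) + real (N - M) * bound (real M)"
    using Suc.prems(1) A_D by (simp add: sum.If_cases M_def Int_def set_diff_eq)
  also have "\<dots> = fact (N-1) * (real M * q * exp (-(1-q) * real k * (real M - 1) / (real N - 1))
       + real (N - M) * exp (-(1-q) * real k * real M / (real N - 1)))"
    by (simp add: bound_def algebra_simps)
  also have "\<dots> \<le> fact (N-1) * (real N * exp (-(1-q) * real (Suc k) * real M / real N))"
    using hits_mgf_recurrence[OF N1 MN _ Suc.prems(3,4), of k] Suc.prems(2)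
    by (intro mult_left_mono) (auto simp: N_def)
  also have "\<dots> = fact N * exp (-(1-q) * real (Suc k) * real M / real N)"
    using N1 by (cases N) auto
  finally show ?case by (simp add: N_def M_def)
qed

text \<open>Markov's inequality for \<open>q ^ hits\<close> with \<open>q = 1 - \<epsilon>\<close>.\<close>
lemma card_permutations_few_hits_le:
  fixes \<epsilon> t :: real and d B :: nat
  assumes "0 < \<epsilon>" "\<epsilon> < 1" "B \<le> d" "d > 0"
    and t: "t \<le> (1-\<epsilon>) * (real B * real (card ({0..<d} \<inter> D)) / real d)"
  shows "real (card {ps \<in> permutations_of_set {0..<d}. real (hits D (take B ps)) < t})
     \<le> fact d * exp (-(\<epsilon>^2/2) * (real B * real (card ({0..<d} \<inter> D)) / real d))"
proof -
  define q where "q = 1 - \<epsilon>"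
  define \<mu> where "\<mu> = real B * real (card ({0..<d} \<inter> D)) / real d"
  define S where "S = {ps \<in> permutations_of_set {0..<d}. real (hits D (take B ps)) < t}"
  have q: "0 < q" "q < 1" using assms by (auto simp: q_def)
  have pow_q: "q ^ k = exp (real k * ln q)" for k
    using q by (simp add: exp_of_nat_mult)
  have "real (card S) * exp (t * ln q) = (\<Sum>ps\<in>S. exp (t * ln q))" by simp
  also have "\<dots> \<le> (\<Sum>ps\<in>S. q ^ hits D (take B ps))"
  proof (intro sum_mono)
    fix ps assume "ps \<in> S"
    hence "t * ln q \<le> real (hits D (take B ps)) * ln q"
      using q by (intro mult_right_mono_neg) (auto simp: S_def)
    thus "exp (t * ln q) \<le> q ^ hits D (take B ps)"
      unfolding pow_q by simp
  qed
  also have "\<dots> \<le> (\<Sum>ps\<in>permutations_of_set {0..<d}. q ^ hits D (take B ps))"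
    using q by (intro sum_mono2) (auto simp: S_def)
  also have "\<dots> \<le> fact d * exp (-\<epsilon> * \<mu>)"
    using sum_permutations_pow_hits_le[of "{0..<d}" B q D] q assms(3)
    by (simp add: q_def \<mu>_def mult.assoc)
  finally have "real (card S) \<le> fact d * exp (-\<epsilon> * \<mu> - t * ln q)"
    by (simp add: exp_diff divide_simps mult.commute)
  moreover have "-\<epsilon> * \<mu> - t * ln q \<le> -\<mu> * (\<epsilon> + (1-\<epsilon>) * ln (1-\<epsilon>))"
  proof -
    have "t * (- ln q) \<le> ((1-\<epsilon>) * \<mu>) * (- ln q)"
      using t q by (intro mult_right_mono) (auto simp: \<mu>_def)
    then show ?thesis by (simp add: q_def algebra_simps)
  qed
  moreover have "-\<mu> * (\<epsilon> + (1-\<epsilon>) * ln (1-\<epsilon>)) \<le> -\<mu> * (\<epsilon>^2/2)"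
    using chernoff_rate_ge[of \<epsilon>] assms(1,2) by (intro mult_left_mono_neg) (auto simp: \<mu>_def)
  ultimately have "exp (-\<epsilon> * \<mu> - t * ln q) \<le> exp (-(\<epsilon>^2/2) * \<mu>)"
    by (simp add: mult.commute)
  with \<open>real (card S) \<le> _\<close> have "real (card S) \<le> fact d * exp (-(\<epsilon>^2/2) * \<mu>)"
    by (meson fact_ge_zero mult_left_mono order_trans)
  then show ?thesis by (simp add: S_def \<mu>_def)
qed

text \<open>Rotation by \<open>j\<close> permutes the permutations and moves the block at \<open>j\<close> to the front.\<close>
lemma card_permutations_drop_take_eq:
  assumes "j + B \<le> d"
  shows "card {ps \<in> permutations_of_set {0..<d}. Q (take B (drop j ps))}
       = card {ps \<in> permutations_of_set {0..<d}. Q (take B ps)}"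
proof -
  define P where "P = permutations_of_set {0..<d}"
  have inj: "inj (rotate j :: nat list \<Rightarrow> nat list)"
    unfolding rotate_def by (intro inj_fn inj_rotate1)
  have "rotate j ` P \<subseteq> P"
    unfolding P_def by (force simp: permutations_of_set_def)
  then have rotate_P: "rotate j ` P = P"
    by (intro endo_inj_surj inj_on_subset[OF inj subset_UNIV]) (simp_all add: P_def)
  have take_rotate: "take B (rotate j ps) = take B (drop j ps)" if "ps \<in> P" for ps
  proof -
    have "length ps = d"
      using that length_finite_permutations_of_set unfolding P_def by fastforce
    then show ?thesis
      using assms by (cases "j < length ps") (auto simp: rotate_drop_take)
  qed
  have "card {ps \<in> P. Q (take B (drop j ps))} = card {ps \<in> P. Q (take B (rotate j ps))}"
    using take_rotate by (intro arg_cong[where f=card]) auto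
  also have "\<dots> = card (rotate j ` {ps \<in> P. Q (take B (rotate j ps))})"
    by (rule card_image[symmetric]) (use inj inj_on_subset in blast)
  also have "rotate j ` {ps \<in> P. Q (take B (rotate j ps))} = {ps \<in> P. Q (take B ps)}"
  proof
    show "{ps \<in> P. Q (take B ps)} \<subseteq> rotate j ` {ps \<in> P. Q (take B (rotate j ps))}"
      using rotate_P by (auto simp: image_iff)
  qed (use rotate_P in auto)
  finally show ?thesis by (simp add: P_def)
qed

lemma prob_permutation_block_hits_ge:
  fixes \<epsilon> \<mu> :: real
  assumes "\<epsilon> > 0" "d > 0" "j + B \<le> d"
    and "0 \<le> \<mu>" "\<mu> \<le> real B * real (card ({0..<d} \<inter> D)) / real d"
  shows "measure_pmf.prob (pmf_of_set (permutations_of_set {0..<d}))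
           {ps. real (hits D (take B (drop j ps))) \<ge> (1-\<epsilon>) * \<mu>}
         \<ge> 1 - exp (-(\<epsilon>^2/2) * \<mu>)"
proof -
  define P where "P = permutations_of_set {0..<d}"
  define Good where "Good = {ps \<in> P. real (hits D (take B (drop j ps))) \<ge> (1-\<epsilon>) * \<mu>}"
  have P: "finite P" "P \<noteq> {}" "card P = fact d" by (auto simp: P_def)
  have prob: "measure_pmf.prob (pmf_of_set P) {ps. real (hits D (take B (drop j ps))) \<ge> (1-\<epsilon>) * \<mu>}
      = real (card Good) / fact d"
    using P by (simp add: measure_pmf_of_set Good_def Int_def conj_commute)
  show ?thesis
  proof (cases "\<epsilon> \<ge> 1")
    case True
    then have "(1-\<epsilon>) * \<mu> \<le> 0" using assms(4) by (simp add: mult_nonpos_nonneg)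
    then have "Good = P" by (auto simp: Good_def)
    then show ?thesis using prob P by (simp flip: P_def)
  next
    case False
    define Bad where "Bad = {ps \<in> P. real (hits D (take B (drop j ps))) < (1-\<epsilon>) * \<mu>}"
    have "P = Good \<union> Bad" by (auto simp: Good_def Bad_def)
    moreover have "card (Good \<union> Bad) = card Good + card Bad"
      using P(1) by (intro card_Un_disjoint) (auto simp: Good_def Bad_def)
    ultimately have "real (card Good) + real (card Bad) = fact d"
      using P(3) by (metis of_nat_add of_nat_fact)
    moreover have "real (card Bad) \<le> fact d * exp (-(\<epsilon>^2/2) * \<mu>)"
    proof -
      have "card Bad = card {ps \<in> P. real (hits D (take B ps)) < (1-\<epsilon>) * \<mu>}"
        using card_permutations_drop_take_eq[OF assms(3), of "\<lambda>l. real (hits D l) < (1-\<epsilon>) * \<mu>"]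
        by (simp add: Bad_def P_def)
      also have "real \<dots> \<le> fact d * exp (-(\<epsilon>^2/2) * (real B * real (card ({0..<d} \<inter> D)) / real d))"
        unfolding P_def using assms False
        by (intro card_permutations_few_hits_le mult_left_mono) auto
      also have "\<dots> \<le> fact d * exp (-(\<epsilon>^2/2) * \<mu>)"
        using assms(5) by (intro mult_left_mono exp_le_cancel_iff[THEN iffD2] mult_left_mono_neg) auto
      finally show ?thesis .
    qed
    ultimately have "real (card Good) \<ge> fact d * (1 - exp (-(\<epsilon>^2/2) * \<mu>))"
      by (simp add: right_diff_distrib)
    then have "1 - exp (-(\<epsilon>^2/2) * \<mu>) \<le> real (card Good) / fact d"
      by (simp add: pos_le_divide_eq mult.commute)
    then show ?thesis using prob by (simp add: P_def)
  qed
qed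

lemma hdist_map_nth: "hdist (map ((!) x) js) (map ((!) y) js) = hits {j. x ! j \<noteq> y ! j} js"
  unfolding hdist_def hits_def length_filter_conv_card by (intro arg_cong[where f=card]) auto

lemma hdist_eq_card_Int:
  assumes "length x = d" "length y = d"
  shows "hdist x y = card ({0..<d} \<inter> {j. x ! j \<noteq> y ! j})"
  unfolding hdist_def using assms by (intro arg_cong[where f=card]) auto

lemma hits_permutation:
  assumes "ps \<in> permutations_of_set A"
  shows "hits D ps = card (A \<inter> D)"
proof -
  have "distinct ps" "set ps = A" using permutations_of_setD[OF assms] by auto
  then show ?thesis
    unfolding hits_def by (simp add: distinct_length_filter Int_commute)
qed

definition block :: "nat \<Rightarrow> nat \<Rightarrow> 'a list \<Rightarrow> 'a list" where
  "block B i xs = take B (drop (i * B) xs)"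

lemma length_block: "Suc i * B \<le> length xs \<Longrightarrow> length (block B i xs) = B"
  by (simp add: block_def)

lemma sum_hits_block: "(\<Sum>i<m. hits D (block B i xs)) = hits D (take (m * B) xs)"
proof (induction m)
  case (Suc m)
  have "take (m * B + B) xs = take (m * B) xs @ block B m xs"
    by (simp add: block_def take_add)
  then show ?case using Suc by (simp add: hits_def add.commute)
qed simp

lemma exists_le_average:
  fixes a :: "nat \<Rightarrow> real"
  assumes "m > 0"
  shows "\<exists>i<m. a i \<le> (\<Sum>i<m. a i) / real m"
proof (rule ccontr)
  assume "\<not> ?thesis"
  then have "(\<Sum>i<m. (\<Sum>i<m. a i) / real m) < (\<Sum>i<m. a i)"
    using assms by (intro sum_strict_mono) auto
  then show False using assms by simp
qed

definition block_projections :: "nat \<Rightarrow> nat \<Rightarrow> nat list \<Rightarrow> (bool list \<Rightarrow> bool list) list" where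
  "block_projections m B ps = map (\<lambda>i x. map ((!) x) (block B i ps)) [0..<m]"

lemma hdist_block_projections:
  assumes "i < m"
  shows "hdist ((block_projections m B ps ! i) x) ((block_projections m B ps ! i) y)
       = hits {j. x ! j \<noteq> y ! j} (block B i ps)"
  using assms by (simp add: block_projections_def hdist_map_nth)

lemma exists_block_projection_hdist_le:
  assumes "ps \<in> permutations_of_set {0..<m * B}" "length x = m * B" "length y = m * B" "m > 0"
  shows "\<exists>f \<in> set (block_projections m B ps). real (hdist (f x) (f y)) \<le> real (hdist x y) / real m"
proof -
  let ?fs = "block_projections m B ps"
  have "length ps = m * B"
    using assms(1) length_finite_permutations_of_set by fastforce
  then have "(\<Sum>i<m. real (hdist ((?fs ! i) x) ((?fs ! i) y))) = real (hdist x y)"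
    using assms by (simp add: hdist_block_projections sum_hits_block hits_permutation
        hdist_eq_card_Int flip: of_nat_sum)
  then obtain i where "i < m" "real (hdist ((?fs ! i) x) ((?fs ! i) y)) \<le> real (hdist x y) / real m"
    using exists_le_average[OF assms(4), of "\<lambda>i. real (hdist ((?fs ! i) x) ((?fs ! i) y))"] by auto
  moreover have "?fs ! i \<in> set ?fs" if "i < m" for i
    using that by (simp add: block_projections_def)
  ultimately show ?thesis by blast
qed

definition random_block_projections :: "nat \<Rightarrow> nat \<Rightarrow> (bool list \<Rightarrow> bool list) list pmf" where
  "random_block_projections m B =
     map_pmf (block_projections m B) (pmf_of_set (permutations_of_set {0..<m * B}))"

lemma set_pmf_random_block_projections:
  assumes "Fs \<in> set_pmf (random_block_projections m B)"
  shows "length Fs = m" and "f \<in> set Fs \<Longrightarrow> length (f x) = B"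
proof -
  obtain ps where ps: "ps \<in> permutations_of_set {0..<m * B}" "Fs = block_projections m B ps"
    using assms by (auto simp: random_block_projections_def)
  then show "length Fs = m" by (simp add: block_projections_def)
  have "length ps = m * B" using ps(1) length_finite_permutations_of_set by fastforce
  then have "length (block B i ps) = B" if "i < m" for i
    using that by (intro length_block) (simp add: mult_le_mono1 del: mult_Suc)
  then show "length (f x) = B" if "f \<in> set Fs"
    using that ps(2) by (auto simp: block_projections_def)
qed

lemma prob_random_block_projections_close:
  assumes "length x = m * B" "length y = m * B" "m > 0"
  shows "measure_pmf.prob (random_block_projections m B)
           {Fs. \<exists>f \<in> set Fs. real (hdist (f x) (f y)) \<le> real (hdist x y) / real m} = 1"
proof -
  define P where "P = permutations_of_set {0..<m * B}"
  have "P \<inter> block_projections m B -`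
      {Fs. \<exists>f \<in> set Fs. real (hdist (f x) (f y)) \<le> real (hdist x y) / real m} = P"
    using exists_block_projection_hdist_le[of _ m B x y] assms by (auto simp: P_def)
  moreover have "finite P" "P \<noteq> {}" by (auto simp: P_def)
  ultimately show ?thesis
    by (simp add: random_block_projections_def measure_pmf_of_set card_gt_0_iff flip: P_def)
qed

lemma prob_random_block_projections_far:
  fixes \<epsilon> \<mu> :: real
  assumes "length x = m * B" "length y = m * B" "i < m" "B > 0" "\<epsilon> > 0"
    and "0 \<le> \<mu>" "\<mu> \<le> real (hdist x y) / real m"
  shows "measure_pmf.prob (random_block_projections m B)
           {Fs. real (hdist ((Fs ! i) x) ((Fs ! i) y)) \<ge> (1-\<epsilon>) * \<mu>}
         \<ge> 1 - exp (-(\<epsilon>^2/2) * \<mu>)"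
proof -
  have "Suc i * B \<le> m * B" using assms(3) by (intro mult_le_mono1) simp
  moreover have "real (hdist x y) / real m
      = real B * real (card ({0..<m * B} \<inter> {j. x ! j \<noteq> y ! j})) / real (m * B)"
    unfolding hdist_eq_card_Int[OF assms(1,2)] using assms(4) by simp
  ultimately show ?thesis
    using assms prob_permutation_block_hits_ge[of \<epsilon> "m * B" "i * B" B \<mu> "{j. x ! j \<noteq> y ! j}"]
    by (simp add: random_block_projections_def hdist_block_projections block_def add.commute)
qed

theorem lemma4:
  fixes n d B :: nat and c r \<epsilon> :: real
  assumes "n \<ge> 2" and "c \<ge> 1" and "r \<ge> 1" and "real d \<ge> r" and "\<epsilon> > 0"
    and B_def: "real B = 2 * \<epsilon> powr (-2) * (real d / (c * r)) * ln (real n)"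
    and B_dvd: "B dvd d"
  shows "\<exists>F :: (bool list \<Rightarrow> bool list) list pmf.
    (\<forall>Fs \<in> set_pmf F. length Fs = d div B \<and>
        (\<forall>f \<in> set Fs. \<forall>x. length x = d \<longrightarrow> length (f x) = B)) \<and>
    (\<forall>x y. length x = d \<longrightarrow> length y = d \<longrightarrow>
       measure_pmf.prob F {Fs. \<exists>f \<in> set Fs.
          real (hdist (f x) (f y)) \<le> real (hdist x y) * real B / real d} = 1) \<and>
    (\<forall>x y. length x = d \<longrightarrow> length y = d \<longrightarrow> real (hdist x y) \<ge> c * r \<longrightarrow>
       (\<forall>i < d div B. measure_pmf.prob F {Fs.
          real (hdist ((Fs ! i) x) ((Fs ! i) y)) \<ge> (1 - \<epsilon>) * c * r * real B / real d}
        \<ge> 1 - 1 / real n))"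
proof -
  define m where "m = d div B"
  have d: "d > 0" using assms(3,4) by simp
  have exp_bound: "exp (-(\<epsilon>^2/2) * (c * r * real B / real d)) = 1 / real n"
    using assms(1-3,5) d by (simp add: B_def powr_minus powr_realpow field_simps exp_minus)
  have "B > 0"
  proof (rule ccontr)
    assume "\<not> B > 0"
    then show False using exp_bound assms(1) by simp
  qed
  then have mB: "m * B = d" and "m > 0" using B_dvd d by (auto simp: m_def)
  have scale: "z * real B / real d = z / real m" for z
    using \<open>B > 0\<close> by (simp flip: mB)
  show ?thesis
  proof (intro exI[of _ "random_block_projections m B"] conjI allI impI ballI)
    fix Fs assume Fs: "Fs \<in> set_pmf (random_block_projections m B)"
    then show "length Fs = d div B"
      using set_pmf_random_block_projections(1) by (simp add: m_def)
    show "length (f x) = B" if "f \<in> set Fs" for f x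
      using set_pmf_random_block_projections(2)[OF Fs that] .
  next
    fix x y :: "bool list" assume "length x = d" "length y = d"
    then show "measure_pmf.prob (random_block_projections m B)
        {Fs. \<exists>f \<in> set Fs. real (hdist (f x) (f y)) \<le> real (hdist x y) * real B / real d} = 1"
      using prob_random_block_projections_close[of x m B y] \<open>m > 0\<close> by (simp add: mB scale)
  next
    fix x y :: "bool list" and i
    assume xy: "length x = d" "length y = d" "real (hdist x y) \<ge> c * r" and "i < d div B"
    have "c * r * real B / real d \<le> real (hdist x y) / real m"
      using xy(3) \<open>m > 0\<close> by (simp add: scale divide_right_mono)
    moreover have threshold: "(1 - \<epsilon>) * c * r * real B / real d = (1 - \<epsilon>) * (c * r * real B / real d)"
      by simp
    ultimately show "measure_pmf.prob (random_block_projections m B)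
        {Fs. real (hdist ((Fs ! i) x) ((Fs ! i) y)) \<ge> (1 - \<epsilon>) * c * r * real B / real d} \<ge> 1 - 1 / real n"
      unfolding threshold exp_bound[symmetric] using xy \<open>i < d div B\<close> \<open>B > 0\<close> assms(2,3,5) d
      by (intro prob_random_block_projections_far) (simp_all add: mB flip: m_def)
  qed
qed

end
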